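(* For any non-negative integers $b$ and $c$, \[\binom{2b}{b}=\frac{1}{4^c}C(b,c)+\sum_{j=1}^c\frac{1}{4^j}C(b+1,j-1),\qquad 2\,C(b)=\frac{1}{4^c}C(b,c+1)+\sum_{j=1}^c\frac{1}{4^j}C(b+1,j).\]
   Context: $C(p,q)=\frac{(2p)!(2q)!}{p!(p+q)!q!}$ for non-negative integers $p,q$, and $C(b)=\frac{1}{b+1}\binom{2b}{b}$ is the $b$-th Catalan number. *)

theory Defs
  imports Complex_Main
begin

definition superC :: "nat \<Rightarrow> nat \<Rightarrow> real" where
  "superC p q = (fact (2*p) * fact (2*q)) / (fact p * fact (p+q) * fact q)"

definition catalan :: "nat \<Rightarrow> real" where
  "catalan b = real ((2*b) choose b) / real (b+1)"

end

theory Submission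
  imports Defs
begin

text \<open>The super Catalan numbers satisfy \<open>4 C(m,n) = C(m+1,n) + C(m,n+1)\<close>. Dividing by
  \<open>4^(n+1)\<close> and iterating in the second argument telescopes \<open>C(b,k)\<close> into
  \<open>C(b,k+c)/4^c\<close> plus a weighted sum of the \<open>C(b+1,\<cdot>)\<close>; the two identities are the cases
  \<open>k = 0\<close> and \<open>k = 1\<close>, since \<open>C(b,0) = binom(2b,b)\<close> and \<open>C(b,1) = 2 C(b)\<close>.\<close>

lemma superC_Suc_left:
  "superC (Suc m) n = superC m n * (2 * (2 * m + 1)) / (m + n + 1)"
proof -
  have "fact (2 * Suc m) = (fact (2 * m) :: real) * (2 * m + 1) * (2 * m + 2)"
    and "fact (Suc m + n) = (fact (m + n) :: real) * (m + n + 1)"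
    and "fact (Suc m) = (fact m :: real) * (m + 1)"
    by (simp_all add: fact_Suc algebra_simps)
  then show ?thesis
    unfolding superC_def
    by (simp add: divide_simps del: of_nat_Suc) (simp add: algebra_simps)
qed

lemma superC_Suc_right:
  "superC m (Suc n) = superC m n * (2 * (2 * n + 1)) / (m + n + 1)"
proof -
  have "fact (2 * Suc n) = (fact (2 * n) :: real) * (2 * n + 1) * (2 * n + 2)"
    and "fact (m + Suc n) = (fact (m + n) :: real) * (m + n + 1)"
    and "fact (Suc n) = (fact n :: real) * (n + 1)"
    by (simp_all add: fact_Suc algebra_simps)
  then show ?thesis
    unfolding superC_def
    by (simp add: divide_simps del: of_nat_Suc) (simp add: algebra_simps)
qed

lemma superC_four_mult: "4 * superC m n = superC (Suc m) n + superC m (Suc n)"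
proof -
  have "real m + real n + 1 \<noteq> 0"
    by (simp add: add_nonneg_pos)
  then show ?thesis
    unfolding superC_Suc_left superC_Suc_right
    by (simp add: divide_simps del: of_nat_Suc) (simp add: algebra_simps)
qed

lemma superC_0_right: "superC b 0 = real ((2 * b) choose b)"
  using binomial_fact[of b "2 * b", where 'a = real] by (simp add: superC_def mult_2)

lemma superC_1_right: "superC b 1 = 2 * catalan b"
  using superC_Suc_right[of b 0] by (simp add: superC_0_right catalan_def)

lemma superC_telescope:
  "superC b k = superC b (k + c) / 4 ^ c + (\<Sum>j=1..c. superC (Suc b) (k + j - 1) / 4 ^ j)"
proof (induction c)
  case 0
  then show ?case by simp
next
  case (Suc c)
  have "superC b (k + c) / 4 ^ c
      = superC b (k + Suc c) / 4 ^ Suc c + superC (Suc b) (k + Suc c - 1) / 4 ^ Suc c"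
    using superC_four_mult[of b "k + c"] by (simp add: field_simps)
  with Suc.IH show ?case by simp
qed

theorem corollary8p9:
  fixes b c :: nat
  shows "(real ((2*b) choose b) = superC b c / 4^c + (\<Sum>j=1..c. superC (b+1) (j-1) / 4^j)) \<and>
         (2 * catalan b = superC b (c+1) / 4^c + (\<Sum>j=1..c. superC (b+1) j / 4^j))"
  using superC_telescope[of b 0 c] superC_telescope[of b 1 c] superC_0_right superC_1_right
  by simp

end
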